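(* Let $\mathcal S=\{d_1,\dots,d_k\}\subset\mathbb R^n$ be a positive spanning set of unit vectors and let $u^*$ be a cosine vector of $\mathcal S$. Then there exists a basis $\mathcal B\subset\mathcal S$ of $\mathbb R^n$ such that $u^*$ is the Gram vector of $\mathcal B$ with Gram value equal to $\operatorname{cm}(\mathcal S)$.
   Context: A finite set is positive spanning if its positive span $\{\sum\lambda_id_i:\lambda_i\ge0\}$ is $\mathbb R^n$. The cosine measure is $\operatorname{cm}(\mathcal S)=\min_{\|u\|=1}\max_{d\in\mathcal S}\frac{d^\top u}{\|d\|}$ and its minimizers are cosine vectors. For a basis $\mathcal B=\{b_1,\dots,b_n\}$ of $\mathbb R^n$, a Gram vector of $\mathcal B$ with Gram value $\gamma$ is a unit vector $u$ with $u^\top b_i=\gamma>0$ for all $i$. *)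

theory Defs
  imports "HOL-Analysis.Analysis"
begin

definition pos_span :: "'a::euclidean_space set \<Rightarrow> 'a set" where
  "pos_span S = {y. \<exists>c. (\<forall>d\<in>S. c d \<ge> 0) \<and> y = (\<Sum>d\<in>S. c d *\<^sub>R d)}"

definition positive_spanning :: "'a::euclidean_space set \<Rightarrow> bool" where
  "positive_spanning S \<longleftrightarrow> finite S \<and> pos_span S = UNIV"

definition cm_val :: "'a::euclidean_space set \<Rightarrow> 'a \<Rightarrow> real" where
  "cm_val S u = Max ((\<lambda>d. (d \<bullet> u) / norm d) ` S)"

text \<open>Cosine measure: minimum over unit vectors u of cm_val S u (the minimum is
  attained for a finite nonempty set, so the infimum equals the minimum).\<close>
definition cosine_measure :: "'a::euclidean_space set \<Rightarrow> real" where
  "cosine_measure S = (INF u\<in>{u. norm u = 1}. cm_val S u)"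

definition cosine_vector :: "'a::euclidean_space set \<Rightarrow> 'a \<Rightarrow> bool" where
  "cosine_vector S u \<longleftrightarrow> norm u = 1 \<and> cm_val S u = cosine_measure S"

definition gram_vector :: "'a::euclidean_space set \<Rightarrow> 'a \<Rightarrow> real \<Rightarrow> bool" where
  "gram_vector B u \<gamma> \<longleftrightarrow> norm u = 1 \<and> \<gamma> > 0 \<and> (\<forall>b\<in>B. u \<bullet> b = \<gamma>)"

end

theory Submission
  imports Defs
begin

text \<open>Since \<open>u\<close> lies in the positive span of \<open>S\<close>, some direction of \<open>S\<close> makes an acute
  angle with \<open>u\<close>, so the cosine measure is positive. If the directions of \<open>S\<close> attaining it
  at \<open>u\<close> did not span the space, moving \<open>u\<close> slightly along a vector orthogonal to them
  (and not obtuse to \<open>u\<close>) and renormalising would strictly lower the cosine of every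
  direction, contradicting minimality. A basis contained in the active directions is then
  the required one.\<close>

definition active_set :: "'a::euclidean_space set \<Rightarrow> 'a \<Rightarrow> 'a set" where
  "active_set S u = {d\<in>S. d \<bullet> u / norm d = cm_val S u}"

lemma cm_val_ge:
  assumes "finite S" "d \<in> S"
  shows "d \<bullet> u / norm d \<le> cm_val S u"
  unfolding cm_val_def using assms by (intro Max_ge) auto

lemma cosine_measure_le_cm_val:
  assumes "finite S" "S \<noteq> {}" "norm v = 1"
  shows "cosine_measure S \<le> cm_val S v"
proof -
  obtain d0 where d0: "d0 \<in> S" using assms(2) by blast
  have "-1 \<le> cm_val S x" if "norm x = 1" for x
  proof -
    have "\<bar>d0 \<bullet> x\<bar> \<le> norm d0"
      using Cauchy_Schwarz_ineq2[of d0 x] that by simp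
    then have "-1 \<le> d0 \<bullet> x / norm d0"
      by (cases "d0 = 0") (auto simp: abs_le_iff field_simps)
    also have "\<dots> \<le> cm_val S x" using cm_val_ge[OF assms(1) d0] .
    finally show ?thesis .
  qed
  then have "bdd_below (cm_val S ` {u. norm u = 1})"
    by (intro bdd_belowI2[where m="-1"]) auto
  then show ?thesis
    unfolding cosine_measure_def using assms(3) by (intro cINF_lower) auto
qed

lemma pos_span_inner_pos:
  assumes "u \<in> pos_span S" "u \<noteq> 0"
  shows "\<exists>d\<in>S. 0 < d \<bullet> u"
proof (rule ccontr)
  assume nonpos: "\<not> (\<exists>d\<in>S. 0 < d \<bullet> u)"
  obtain c where c: "\<forall>d\<in>S. 0 \<le> c d" and u: "u = (\<Sum>d\<in>S. c d *\<^sub>R d)"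
    using assms(1) unfolding pos_span_def by auto
  have "u \<bullet> u = (\<Sum>d\<in>S. c d * (d \<bullet> u))"
    by (subst (1) u) (simp add: inner_sum_left)
  also have "\<dots> \<le> 0"
    using c nonpos by (intro sum_nonpos) (simp add: mult_nonneg_nonpos not_less)
  finally show False using assms(2) by (metis inner_gt_zero_iff not_le)
qed

lemma cosine_measure_pos:
  assumes "positive_spanning S" "cosine_vector S u"
  shows "0 < cosine_measure S"
proof -
  have "finite S" "u \<in> pos_span S" "u \<noteq> 0"
    using assms unfolding positive_spanning_def cosine_vector_def by auto
  then obtain d where "d \<in> S" "0 < d \<bullet> u"
    using pos_span_inner_pos by blast
  then have "0 < d \<bullet> u / norm d" by (cases "d = 0") auto
  also have "\<dots> \<le> cosine_measure S"
    using cm_val_ge[OF \<open>finite S\<close> \<open>d \<in> S\<close>, of u] assms(2) by (simp add: cosine_vector_def)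
  finally show ?thesis .
qed

lemma norm_add_scaleR_gt_1:
  fixes u w :: "'a::real_inner"
  assumes "norm u = 1" "0 \<le> u \<bullet> w" "w \<noteq> 0" "0 < t"
  shows "1 < norm (u + t *\<^sub>R w)"
proof -
  have "(norm (u + t *\<^sub>R w))\<^sup>2 = u \<bullet> u + 2 * t * (u \<bullet> w) + t\<^sup>2 * (w \<bullet> w)"
    unfolding power2_norm_eq_inner by (simp add: inner_add_left inner_add_right inner_commute
        algebra_simps power2_eq_square)
  also have "\<dots> = 1 + 2 * t * (u \<bullet> w) + t\<^sup>2 * (norm w)\<^sup>2"
    using assms(1) by (simp add: dot_square_norm)
  also have "\<dots> > 1\<^sup>2" using assms(2-4) by (simp add: add_nonneg_pos)
  finally show ?thesis by (metis abs_norm_cancel power2_less_imp_less norm_ge_zero)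
qed

text \<open>Moving \<open>u\<close> along \<open>w\<close> keeps the inner products with the active directions, while the
  norm grows; so after renormalising the active cosines drop below \<open>cm_val S u\<close>, and the
  inactive ones stay below it by continuity.\<close>

lemma cm_val_decreases_along_orthogonal:
  assumes "finite S" "S \<noteq> {}" "norm u = 1" "0 < cm_val S u"
    and "w \<noteq> 0" "0 \<le> u \<bullet> w" "\<forall>d\<in>active_set S u. d \<bullet> w = 0"
  shows "\<exists>z. norm z = 1 \<and> cm_val S z < cm_val S u"
proof -
  define \<gamma> where "\<gamma> = cm_val S u"
  define z where "z t = (u + t *\<^sub>R w) /\<^sub>R norm (u + t *\<^sub>R w)" for t :: real
  have inactive: "\<forall>\<^sub>F t in at_right 0. d \<bullet> z t / norm d < \<gamma>"
    if d: "d \<in> S - active_set S u" for d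
  proof -
    have "((\<lambda>t. d \<bullet> z t) \<longlongrightarrow> d \<bullet> z 0) (at_right 0)"
      unfolding z_def using assms(3) by (intro tendsto_intros) auto
    then have "((\<lambda>t. d \<bullet> z t / norm d) \<longlongrightarrow> d \<bullet> z 0 / norm d) (at_right 0)"
      unfolding divide_inverse by (rule tendsto_mult_right)
    moreover have "d \<bullet> z 0 / norm d < \<gamma>"
      using d cm_val_ge[OF assms(1), of d u] assms(3)
      unfolding z_def \<gamma>_def active_set_def by auto
    ultimately show ?thesis by (rule order_tendstoD)
  qed
  have "\<forall>\<^sub>F t in at_right 0. 0 < t \<and> (\<forall>d\<in>S - active_set S u. d \<bullet> z t / norm d < \<gamma>)"
    using inactive assms(1)
    by (intro eventually_conj eventually_at_right_less eventually_ball_finite) auto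
  then obtain t where t: "0 < t" and below: "\<forall>d\<in>S - active_set S u. d \<bullet> z t / norm d < \<gamma>"
    using eventually_happens'[OF trivial_limit_at_right_real] by blast
  have n: "1 < norm (u + t *\<^sub>R w)"
    using norm_add_scaleR_gt_1 assms(3,5,6) t by blast
  have "d \<bullet> z t / norm d < \<gamma>" if d: "d \<in> S" for d
  proof (cases "d \<in> active_set S u")
    case True
    then have "d \<bullet> w = 0" "d \<bullet> u / norm d = \<gamma>"
      using assms(7) by (auto simp: active_set_def \<gamma>_def)
    then have "d \<bullet> z t / norm d = \<gamma> / norm (u + t *\<^sub>R w)"
      by (simp add: z_def inner_add_right divide_inverse ac_simps)
    also have "\<dots> < \<gamma>" using n assms(4) by (simp add: \<gamma>_def divide_less_eq)
    finally show ?thesis .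
  qed (use below d in auto)
  then have "cm_val S (z t) < \<gamma>"
    unfolding cm_val_def using assms(1,2) by (subst Max_less_iff) auto
  moreover have "norm (z t) = 1" using n by (auto simp: z_def sgn_div_norm[symmetric] norm_sgn)
  ultimately show ?thesis unfolding \<gamma>_def by blast
qed

lemma span_active_set_eq_UNIV:
  assumes "finite S" "S \<noteq> {}" "cosine_vector S u" "0 < cosine_measure S"
  shows "span (active_set S u) = UNIV"
proof (rule ccontr)
  assume "span (active_set S u) \<noteq> UNIV"
  then obtain w where w: "w \<noteq> 0" "\<forall>x\<in>span (active_set S u). w \<bullet> x = 0"
    using span_not_UNIV_orthogonal by blast
  define w' where "w' = (if 0 \<le> u \<bullet> w then w else - w)"
  have "w' \<noteq> 0" "0 \<le> u \<bullet> w'" using w(1) by (auto simp: w'_def)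
  moreover have "\<forall>d\<in>active_set S u. d \<bullet> w' = 0"
    using w(2) span_base by (fastforce simp: w'_def inner_commute)
  ultimately obtain z where "norm z = 1" "cm_val S z < cm_val S u"
    using cm_val_decreases_along_orthogonal[OF assms(1,2)] assms(3,4)
    by (metis cosine_vector_def)
  then show False
    using cosine_measure_le_cm_val[OF assms(1,2)] assms(3) by (force simp: cosine_vector_def)
qed

theorem corollary1:
  fixes S :: "'a::euclidean_space set" and u :: 'a
  assumes "positive_spanning S"
    and "\<forall>d\<in>S. norm d = 1"
    and "cosine_vector S u"
  shows "\<exists>B\<subseteq>S. independent B \<and> span B = UNIV \<and> gram_vector B u (cosine_measure S)"
proof -
  have fin: "finite S" using assms(1) by (simp add: positive_spanning_def)
  have pos: "0 < cosine_measure S" using cosine_measure_pos assms(1,3) .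
  have "S \<noteq> {}"
    using pos_span_inner_pos assms(1,3) unfolding positive_spanning_def cosine_vector_def
    by fastforce
  then have span: "span (active_set S u) = UNIV"
    using span_active_set_eq_UNIV fin assms(3) pos by blast
  obtain B where B: "B \<subseteq> active_set S u" "independent B" "active_set S u \<subseteq> span B"
    using maximal_independent_subset by blast
  have "span B = UNIV" using B(3) span by (metis span_minimal subspace_span top.extremum_uniqueI)
  moreover have "gram_vector B u (cosine_measure S)"
    using B(1) assms(2,3) pos
    by (auto simp: gram_vector_def active_set_def cosine_vector_def inner_commute)
  moreover have "B \<subseteq> S" using B(1) by (auto simp: active_set_def)
  ultimately show ?thesis using B(2) by blast
qed

end
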